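(* For real $m>0$ and integer $n\ge m$ there exist positive constants $C_{\mathrm{scale}}$ and $C_{\mathrm{maxdensity}}$, depending only on $m$ and $n$, such that for every integer $k$ with $m<k\le n$, every cube $Q\subset\mathbb{R}^k$ (with sides parallel to the coordinate axes), and every $X\subset\operatorname{int}Q$ with $\mathrm{HC}_m(X)<C_{\mathrm{maxdensity}}\,\mathrm{HC}_m(Q)$, there is a point $O\in\operatorname{int}Q\setminus X$ such that $$\mathrm{HC}_m(\phi_O(X))\le C_{\mathrm{scale}}\,\mathrm{HC}_m(X),$$ where $\phi_O:Q\setminus\{O\}\to\partial Q$ is the radial projection in $Q$ with center $O$.
   Context: $\mathbb{R}^k$ carries the $\ell^\infty$ metric, and $\mathrm{HC}_m(A)$ is the $m$-dimensional Hausdorff content: the infimum of $\sum_i r_i^m$ over coverings of $A$ by metric balls with radii $r_i$. The radial projection $\phi_O$ sends $y\in Q\setminus\{O\}$ to the unique point where the ray from $O$ through $y$ meets $\partial Q$. *)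

theory Defs
  imports "HOL-Analysis.Analysis"
begin

text \<open>Points of R^k are represented as functions nat => real vanishing at
coordinates >= k (k varies inside the statement).\<close>
definition Rk :: "nat \<Rightarrow> (nat \<Rightarrow> real) set" where
  "Rk k = {x. \<forall>i\<ge>k. x i = 0}"

definition linf_cball :: "nat \<Rightarrow> (nat \<Rightarrow> real) \<Rightarrow> real \<Rightarrow> (nat \<Rightarrow> real) set" where
  "linf_cball k c r = {x \<in> Rk k. \<forall>i<k. \<bar>x i - c i\<bar> \<le> r}"

definition HC :: "nat \<Rightarrow> real \<Rightarrow> (nat \<Rightarrow> real) set \<Rightarrow> ennreal" where
  "HC k m A = (INF p \<in> {(c, r). (\<forall>i. c i \<in> Rk k \<and> r i \<ge> 0) \<and>
        A \<subseteq> (\<Union>i. linf_cball k (c i) (r i))}.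
      (\<Sum>i. ennreal ((snd p i) powr m)))"

definition cube :: "nat \<Rightarrow> (nat \<Rightarrow> real) \<Rightarrow> real \<Rightarrow> (nat \<Rightarrow> real) set" where
  "cube k c s = {x \<in> Rk k. \<forall>i<k. \<bar>x i - c i\<bar> \<le> s}"

definition cube_int :: "nat \<Rightarrow> (nat \<Rightarrow> real) \<Rightarrow> real \<Rightarrow> (nat \<Rightarrow> real) set" where
  "cube_int k c s = {x \<in> Rk k. \<forall>i<k. \<bar>x i - c i\<bar> < s}"

definition cube_bd :: "nat \<Rightarrow> (nat \<Rightarrow> real) \<Rightarrow> real \<Rightarrow> (nat \<Rightarrow> real) set" where
  "cube_bd k c s = cube k c s - cube_int k c s"

definition radproj :: "nat \<Rightarrow> (nat \<Rightarrow> real) \<Rightarrow> real \<Rightarrow> (nat \<Rightarrow> real) \<Rightarrow> (nat \<Rightarrow> real) \<Rightarrow> (nat \<Rightarrow> real)" where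
  "radproj k c s p y = (THE z. z \<in> cube_bd k c s \<and> (\<exists>t\<ge>0. z = (\<lambda>i. p i + t * (y i - p i))))"

end

theory Submission
  imports Defs
begin

text \<open>For a centre \<open>p\<close> in the middle half of \<open>Q\<close>, the gauge of \<open>Q - p\<close> is comparable to the
  \<open>\<ell>\<^sup>\<infinity>\<close> norm, so the radial projection \<open>\<phi>\<^sub>p\<close> maps a ball \<open>B(x, r)\<close> at distance \<open>d > 2r\<close>
  from \<open>p\<close> into a ball of radius \<open>24 s r / d\<close>. Given a cover of \<open>X\<close> by balls \<open>B(x\<^sub>i, r\<^sub>i)\<close>, the
  resulting bound \<open>\<Sum>\<^sub>i (s r\<^sub>i / d\<^sub>i)\<^sup>m\<close> is dominated by a weight that is integrable in \<open>p\<close> because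
  \<open>m < k\<close>, and its mean over the middle half is \<open>O(\<Sum>\<^sub>i r\<^sub>i\<^sup>m)\<close>. By Markov's inequality most
  centres are good; those close to some ball of the cover fill little volume because
  \<open>HC\<^sub>m(X)\<close> is small compared with \<open>s\<^sup>m\<close>. When \<open>HC\<^sub>m(X) = 0\<close> the argument is run
  simultaneously for a sequence of covers whose sums decay geometrically.\<close>

section \<open>The gauge of a cube and the radial projection\<close>

definition interval_gauge :: "real \<Rightarrow> real \<Rightarrow> real \<Rightarrow> real" where
  "interval_gauge a b v = (if 0 \<le> v then v / a else - v / b)"

lemma interval_gauge_pos: "0 < a \<Longrightarrow> 0 < b \<Longrightarrow> v \<noteq> 0 \<Longrightarrow> 0 < interval_gauge a b v"
  by (auto simp: interval_gauge_def divide_neg_pos)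

lemma interval_gauge_scale: "0 \<le> t \<Longrightarrow> interval_gauge a b (t * v) = t * interval_gauge a b v"
  by (cases "t = 0") (auto simp: interval_gauge_def zero_le_mult_iff)

lemma interval_gauge_le_1_iff:
  "0 < a \<Longrightarrow> 0 < b \<Longrightarrow> interval_gauge a b v \<le> 1 \<longleftrightarrow> - b \<le> v \<and> v \<le> a"
  by (auto simp: interval_gauge_def field_simps)

lemma interval_gauge_less_1_iff:
  "0 < a \<Longrightarrow> 0 < b \<Longrightarrow> interval_gauge a b v < 1 \<longleftrightarrow> - b < v \<and> v < a"
  by (auto simp: interval_gauge_def field_simps)

lemma abs_le_interval_gauge:
  assumes "0 < a" "0 < b" "a \<le> B" "b \<le> B"
  shows "\<bar>v\<bar> \<le> B * interval_gauge a b v"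
proof (cases "0 \<le> v")
  case True
  with assms have "v \<le> B * (v / a)" by (simp add: field_simps mult_right_mono)
  with True show ?thesis by (simp add: interval_gauge_def)
next
  case False
  with assms have "- v \<le> B * (- v / b)" by (simp add: field_simps mult_right_mono)
  with False show ?thesis by (simp add: interval_gauge_def)
qed

lemma interval_gauge_le_add:
  assumes "0 < L" "L \<le> a" "L \<le> b"
  shows "interval_gauge a b v \<le> interval_gauge a b v' + \<bar>v - v'\<bar> / L"
proof -
  have div_le: "w / a \<le> \<bar>w\<bar> / L" "w / b \<le> \<bar>w\<bar> / L" for w
    using assms by (auto intro!: frac_le)
  have "0 \<le> v' / a" if "0 \<le> v'" using that assms by simp
  moreover have "0 \<le> - v' / b" if "v' < 0" using that assms by (simp add: divide_nonpos_pos)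
  moreover have "v / a \<le> \<bar>v - v'\<bar> / L" if "0 \<le> v" "v' < 0"
    using div_le(1)[of "v - v'"] that assms by (smt (verit) divide_right_mono)
  moreover have "- v / b \<le> \<bar>v - v'\<bar> / L" if "v < 0" "0 \<le> v'"
    using div_le(2)[of "v' - v"] that assms by (smt (verit) divide_right_mono)
  moreover have "v / a - v' / a \<le> \<bar>v - v'\<bar> / L" "- v / b - - v' / b \<le> \<bar>v - v'\<bar> / L"
    using div_le(1)[of "v - v'"] div_le(2)[of "v' - v"]
    by (simp_all add: diff_divide_distrib abs_minus_commute)
  ultimately show ?thesis
    unfolding interval_gauge_def by (smt (verit))
qed

text \<open>The Minkowski functional of \<open>Q - p\<close> for the cube \<open>Q = cube k c s\<close>.\<close>

definition cube_gauge :: "nat \<Rightarrow> (nat \<Rightarrow> real) \<Rightarrow> real \<Rightarrow> (nat \<Rightarrow> real) \<Rightarrow> (nat \<Rightarrow> real) \<Rightarrow> real" where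
  "cube_gauge k c s p u = Max ((\<lambda>j. interval_gauge (c j + s - p j) (p j - c j + s) (u j)) ` {..<k})"

lemma cube_gauge_ge:
  "j < k \<Longrightarrow> interval_gauge (c j + s - p j) (p j - c j + s) (u j) \<le> cube_gauge k c s p u"
  unfolding cube_gauge_def by (rule Max_ge) auto

lemma cube_gauge_le_iff:
  "0 < k \<Longrightarrow> cube_gauge k c s p u \<le> B \<longleftrightarrow> (\<forall>j<k. interval_gauge (c j + s - p j) (p j - c j + s) (u j) \<le> B)"
  unfolding cube_gauge_def by (subst Max_le_iff) auto

lemma cube_gauge_less_iff:
  "0 < k \<Longrightarrow> cube_gauge k c s p u < B \<longleftrightarrow> (\<forall>j<k. interval_gauge (c j + s - p j) (p j - c j + s) (u j) < B)"
  unfolding cube_gauge_def by (subst Max_less_iff) auto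

lemma cube_gauge_scale:
  assumes "0 < k" "0 \<le> t"
  shows "cube_gauge k c s p (\<lambda>i. t * u i) = t * cube_gauge k c s p u"
proof -
  have "mono ((*) t)" using assms(2) by (simp add: mono_def mult_left_mono)
  then have "t * cube_gauge k c s p u =
      Max ((*) t ` (\<lambda>j. interval_gauge (c j + s - p j) (p j - c j + s) (u j)) ` {..<k})"
    unfolding cube_gauge_def using assms(1) by (intro mono_Max_commute) auto
  then show ?thesis
    using assms(2) by (simp add: cube_gauge_def image_image interval_gauge_scale)
qed

lemma cube_int_gauge_params:
  "p \<in> cube_int k c s \<Longrightarrow> j < k \<Longrightarrow> 0 < c j + s - p j \<and> 0 < p j - c j + s"
  by (auto simp: cube_int_def abs_less_iff)

lemma cube_gauge_pos:
  assumes "p \<in> cube_int k c s" "j < k" "u j \<noteq> 0"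
  shows "0 < cube_gauge k c s p u"
  using interval_gauge_pos cube_int_gauge_params[OF assms(1,2)] assms(3) cube_gauge_ge[OF assms(2)]
  by (meson less_le_trans)

lemma mem_cube_iff_cube_gauge:
  assumes "0 < k" "p \<in> cube_int k c s" "y \<in> Rk k"
  shows "y \<in> cube k c s \<longleftrightarrow> cube_gauge k c s p (\<lambda>i. y i - p i) \<le> 1"
proof -
  have "y \<in> cube k c s \<longleftrightarrow> (\<forall>j<k. - (p j - c j + s) \<le> y j - p j \<and> y j - p j \<le> c j + s - p j)"
    using assms(3) by (auto simp: cube_def abs_le_iff)
  also have "\<dots> \<longleftrightarrow> (\<forall>j<k. interval_gauge (c j + s - p j) (p j - c j + s) (y j - p j) \<le> 1)"
    using cube_int_gauge_params[OF assms(2)] by (simp add: interval_gauge_le_1_iff)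
  finally show ?thesis using cube_gauge_le_iff[OF assms(1)] by simp
qed

lemma mem_cube_int_iff_cube_gauge:
  assumes "0 < k" "p \<in> cube_int k c s" "y \<in> Rk k"
  shows "y \<in> cube_int k c s \<longleftrightarrow> cube_gauge k c s p (\<lambda>i. y i - p i) < 1"
proof -
  have "y \<in> cube_int k c s \<longleftrightarrow> (\<forall>j<k. - (p j - c j + s) < y j - p j \<and> y j - p j < c j + s - p j)"
    using assms(3) by (auto simp: cube_int_def abs_less_iff)
  also have "\<dots> \<longleftrightarrow> (\<forall>j<k. interval_gauge (c j + s - p j) (p j - c j + s) (y j - p j) < 1)"
    using cube_int_gauge_params[OF assms(2)] by (simp add: interval_gauge_less_1_iff)
  finally show ?thesis using cube_gauge_less_iff[OF assms(1)] by simp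
qed

lemma Rk_neq_imp_coordinate_neq:
  assumes "x \<in> Rk k" "y \<in> Rk k" "x \<noteq> y"
  shows "\<exists>j<k. x j \<noteq> y j"
proof (rule ccontr)
  assume "\<not> ?thesis"
  then have "x i = y i" for i using assms(1,2) by (cases "i < k") (auto simp: Rk_def)
  then show False using assms(3) by auto
qed

lemma radproj_eq:
  assumes k: "0 < k" and p: "p \<in> cube_int k c s" and y: "y \<in> Rk k" "y \<noteq> p"
  shows "radproj k c s p y = (\<lambda>i. p i + (y i - p i) / cube_gauge k c s p (\<lambda>i. y i - p i))"
proof -
  define N where "N = cube_gauge k c s p (\<lambda>i. y i - p i)"
  have pR: "p \<in> Rk k" using p by (simp add: cube_int_def)
  obtain j where "j < k" "y j \<noteq> p j" using Rk_neq_imp_coordinate_neq[OF y(1) pR y(2)] by blast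
  then have N: "0 < N" unfolding N_def by (intro cube_gauge_pos[OF p]) auto
  have on_boundary: "(\<lambda>i. p i + t * (y i - p i)) \<in> cube_bd k c s \<longleftrightarrow> t * N = 1" if "0 \<le> t" for t
  proof -
    have "(\<lambda>i. p i + t * (y i - p i)) \<in> Rk k" using pR y by (simp add: Rk_def)
    then show ?thesis
      using that by (simp add: cube_bd_def mem_cube_iff_cube_gauge[OF k p] mem_cube_int_iff_cube_gauge[OF k p]
          cube_gauge_scale[OF k] flip: N_def, linarith)
  qed
  have "radproj k c s p y = (\<lambda>i. p i + (1 / N) * (y i - p i))"
    unfolding radproj_def
  proof (rule the_equality)
    show "(\<lambda>i. p i + (1 / N) * (y i - p i)) \<in> cube_bd k c s \<and> (\<exists>t\<ge>0. (\<lambda>i. p i + (1 / N) * (y i - p i)) = (\<lambda>i. p i + t * (y i - p i)))"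
      using on_boundary[of "1 / N"] N by (auto intro: exI[of _ "1 / N"])
  next
    fix w assume "w \<in> cube_bd k c s \<and> (\<exists>t\<ge>0. w = (\<lambda>i. p i + t * (y i - p i)))"
    then obtain t where t: "0 \<le> t" "w = (\<lambda>i. p i + t * (y i - p i))" "t * N = 1"
      using on_boundary by blast
    then have "t = 1 / N" using N by (simp add: field_simps)
    with t show "w = (\<lambda>i. p i + (1 / N) * (y i - p i))" by simp
  qed
  then show ?thesis by (simp add: N_def)
qed

lemma radproj_in_Rk:
  assumes "0 < k" "p \<in> cube_int k c s" "y \<in> Rk k" "y \<noteq> p"
  shows "radproj k c s p y \<in> Rk k"
  using assms(2,3) unfolding radproj_eq[OF assms] by (simp add: Rk_def cube_int_def)

lemma cube_half_subset_cube_int: "0 < s \<Longrightarrow> cube k c (s / 2) \<subseteq> cube_int k c s"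
  by (auto simp: cube_def cube_int_def)

lemma cube_half_gauge_params:
  assumes "p \<in> cube k c (s / 2)" "j < k"
  shows "s / 2 \<le> c j + s - p j" "c j + s - p j \<le> 3 * s / 2"
    and "s / 2 \<le> p j - c j + s" "p j - c j + s \<le> 3 * s / 2"
proof -
  have "\<bar>p j - c j\<bar> \<le> s / 2" using assms by (simp add: cube_def)
  then show "s / 2 \<le> c j + s - p j" "c j + s - p j \<le> 3 * s / 2"
    and "s / 2 \<le> p j - c j + s" "p j - c j + s \<le> 3 * s / 2"
    by arith+
qed

lemma abs_le_cube_gauge:
  assumes s: "0 < s" and p: "p \<in> cube k c (s / 2)" and j: "j < k"
  shows "\<bar>u j\<bar> \<le> 3 * s / 2 * cube_gauge k c s p u"
proof -
  have "\<bar>u j\<bar> \<le> 3 * s / 2 * interval_gauge (c j + s - p j) (p j - c j + s) (u j)"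
    using cube_half_gauge_params[OF p j] s by (intro abs_le_interval_gauge) auto
  also have "\<dots> \<le> 3 * s / 2 * cube_gauge k c s p u"
    using cube_gauge_ge[OF j] s by (intro mult_left_mono) auto
  finally show ?thesis .
qed

lemma cube_gauge_le_add:
  assumes k: "0 < k" and s: "0 < s" and p: "p \<in> cube k c (s / 2)"
    and D: "\<forall>i<k. \<bar>u i - u' i\<bar> \<le> D"
  shows "cube_gauge k c s p u \<le> cube_gauge k c s p u' + 2 * D / s"
  unfolding cube_gauge_le_iff[OF k]
proof (intro allI impI)
  fix j assume j: "j < k"
  have "interval_gauge (c j + s - p j) (p j - c j + s) (u j)
      \<le> interval_gauge (c j + s - p j) (p j - c j + s) (u' j) + \<bar>u j - u' j\<bar> / (s / 2)"
    using cube_half_gauge_params[OF p j] s by (intro interval_gauge_le_add) auto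
  also have "\<dots> \<le> cube_gauge k c s p u' + D / (s / 2)"
    using cube_gauge_ge[OF j, of c s p u'] D j s by (intro add_mono divide_right_mono) auto
  finally show "interval_gauge (c j + s - p j) (p j - c j + s) (u j) \<le> cube_gauge k c s p u' + 2 * D / s"
    by (simp add: mult.commute)
qed

lemma radproj_dist_le:
  assumes k: "0 < k" and s: "0 < s" and p: "p \<in> cube k c (s / 2)"
    and y: "y \<in> Rk k" and y': "y' \<in> Rk k" "y' \<noteq> p"
    and L: "0 < L" "j0 < k" "L \<le> \<bar>y j0 - p j0\<bar>"
    and D: "\<forall>i<k. \<bar>y i - y' i\<bar> \<le> D" and j: "j < k"
  shows "\<bar>radproj k c s p y j - radproj k c s p y' j\<bar> \<le> 6 * s * D / L"
proof -
  have p_int: "p \<in> cube_int k c s" using cube_half_subset_cube_int[OF s] p by blast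
  define u where "u = (\<lambda>i. y i - p i)"
  define u' where "u' = (\<lambda>i. y' i - p i)"
  define N where "N = cube_gauge k c s p u"
  define N' where "N' = cube_gauge k c s p u'"
  have "y \<noteq> p" using L by auto
  then have proj_y: "radproj k c s p y j = p j + u j / N"
    by (simp add: radproj_eq[OF k p_int y] u_def N_def)
  have proj_y': "radproj k c s p y' j = p j + u' j / N'"
    by (simp add: radproj_eq[OF k p_int y'(1) y'(2)] u'_def N'_def)
  have "L \<le> \<bar>u j0\<bar>" using L by (simp add: u_def)
  also have "\<dots> \<le> 3 * s / 2 * N" unfolding N_def by (rule abs_le_cube_gauge[OF s p L(2)])
  finally have LN: "L \<le> 3 * s / 2 * N" .
  then have "0 < 3 * s / 2 * N" using L by linarith
  then have N: "0 < N" using s by (simp add: zero_less_mult_iff)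
  obtain j1 where "j1 < k" "y' j1 \<noteq> p j1"
    using Rk_neq_imp_coordinate_neq[OF y'(1) _ y'(2)] p_int by (auto simp: cube_int_def)
  then have N': "0 < N'" unfolding N'_def u'_def by (intro cube_gauge_pos[OF p_int]) auto
  have "N \<le> N' + 2 * D / s" "N' \<le> N + 2 * D / s"
    using D unfolding N_def N'_def u_def u'_def
    by (intro cube_gauge_le_add[OF k s p]; simp add: abs_minus_commute)+
  then have dN: "\<bar>N' - N\<bar> \<le> 2 * D / s" by linarith
  have "\<bar>u' j / N'\<bar> \<le> 3 * s / 2"
    using abs_le_cube_gauge[OF s p j, of u'] N' by (simp add: N'_def abs_divide divide_le_eq mult.commute)
  moreover have "\<bar>(N' - N) / N\<bar> \<le> (2 * D / s) / N"
    using divide_right_mono[OF dN, of N] N by (simp add: abs_divide)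
  ultimately have "\<bar>u' j / N' * ((N' - N) / N)\<bar> \<le> 3 * s / 2 * ((2 * D / s) / N)"
    unfolding abs_mult using s by (intro mult_mono) auto
  moreover have "\<bar>(u j - u' j) / N\<bar> \<le> D / N"
    using D j N by (simp add: u_def u'_def divide_right_mono)
  moreover have "radproj k c s p y j - radproj k c s p y' j = (u j - u' j) / N + u' j / N' * ((N' - N) / N)"
    using N N' by (simp add: proj_y proj_y' field_simps)
  ultimately have "\<bar>radproj k c s p y j - radproj k c s p y' j\<bar> \<le> D / N + 3 * s / 2 * ((2 * D / s) / N)"
    using abs_triangle_ineq[of "(u j - u' j) / N" "u' j / N' * ((N' - N) / N)"] by linarith
  also have "\<dots> = 4 * D / N" using s by (simp add: field_simps)
  also have "\<dots> \<le> 4 * D / (2 * L / (3 * s))"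
    using LN L s N D j by (intro divide_left_mono) (auto simp: field_simps intro: order_trans[OF abs_ge_zero])
  also have "\<dots> = 6 * s * D / L" using L s by (simp add: field_simps)
  finally show ?thesis .
qed

lemma radproj_image_cball_subset:
  assumes k: "0 < k" and s: "0 < s" and p: "p \<in> cube k c (s / 2)"
    and j0: "j0 < k" and far: "2 * r < \<bar>p j0 - x j0\<bar>" and y0: "y0 \<in> linf_cball k x r"
  shows "radproj k c s p ` linf_cball k x r \<subseteq> linf_cball k (radproj k c s p y0) (24 * s * r / \<bar>p j0 - x j0\<bar>)"
proof
  define d where "d = \<bar>p j0 - x j0\<bar>"
  have p_int: "p \<in> cube_int k c s" using cube_half_subset_cube_int[OF s] p by blast
  have r: "0 \<le> r" using y0 j0 by (force simp: linf_cball_def)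
  have far_from_p: "d / 2 \<le> \<bar>y j0 - p j0\<bar>" if "y \<in> linf_cball k x r" for y
    using that j0 far by (auto simp: linf_cball_def d_def abs_le_iff abs_if split: if_splits)
  have y0_ne: "y0 \<noteq> p" using far_from_p[OF y0] far r by (auto simp: d_def)
  fix z assume "z \<in> radproj k c s p ` linf_cball k x r"
  then obtain y where y: "y \<in> linf_cball k x r" and z: "z = radproj k c s p y" by auto
  have y_ne: "y \<noteq> p" using far_from_p[OF y] far r by (auto simp: d_def)
  have yR: "y \<in> Rk k" "y0 \<in> Rk k" using y y0 by (auto simp: linf_cball_def)
  have D: "\<forall>i<k. \<bar>y i - y0 i\<bar> \<le> 2 * r"
    using y y0 by (force simp: linf_cball_def abs_le_iff)
  have "0 < d / 2" using far r by (simp add: d_def)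
  then have "\<forall>j<k. \<bar>z j - radproj k c s p y0 j\<bar> \<le> 6 * s * (2 * r) / (d / 2)"
    unfolding z using radproj_dist_le[OF k s p yR y0_ne _ j0 far_from_p[OF y] D] by blast
  moreover have "6 * s * (2 * r) / (d / 2) = 24 * s * r / d" by simp
  moreover have "z \<in> Rk k" unfolding z by (rule radproj_in_Rk[OF k p_int yR(1) y_ne])
  ultimately show "z \<in> linf_cball k (radproj k c s p y0) (24 * s * r / \<bar>p j0 - x j0\<bar>)"
    by (simp add: linf_cball_def d_def mult.assoc)
qed

section \<open>Hausdorff content of projected covers\<close>

lemma HC_le_cover:
  assumes "\<forall>i. z i \<in> Rk k \<and> 0 \<le> \<rho> i" "A \<subseteq> (\<Union>i. linf_cball k (z i) (\<rho> i))"
  shows "HC k m A \<le> (\<Sum>i. ennreal (\<rho> i powr m))"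
  unfolding HC_def by (rule INF_lower2[of "(z, \<rho>)"]) (use assms in auto)

lemma HC_less_imp_cover:
  assumes "HC k m A < ennreal v"
  obtains x r S where "\<forall>i. x i \<in> Rk k \<and> 0 \<le> r i" "A \<subseteq> (\<Union>i. linf_cball k (x i) (r i))"
    "(\<Sum>i. ennreal (r i powr m)) = ennreal S" "0 \<le> S" "S < v"
proof -
  obtain x r where cover: "\<forall>i. x i \<in> Rk k \<and> 0 \<le> r i" "A \<subseteq> (\<Union>i. linf_cball k (x i) (r i))"
    and less: "(\<Sum>i. ennreal (r i powr m)) < ennreal v"
    using assms unfolding HC_def INF_less_iff by auto
  define S where "S = enn2real (\<Sum>i. ennreal (r i powr m))"
  have "(\<Sum>i. ennreal (r i powr m)) < top"
    using less ennreal_less_top by (rule order.strict_trans)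
  then have S: "(\<Sum>i. ennreal (r i powr m)) = ennreal S"
    unfolding S_def by simp
  have S0: "0 \<le> S" by (simp add: S_def)
  with less have "S < v" unfolding S by (simp add: ennreal_less_iff)
  with cover S S0 show ?thesis by (rule that)
qed

lemma HC_less_imp_covers:
  assumes "\<And>j. HC k m A < ennreal (v j)"
  obtains x r S where "\<And>j. \<forall>i. x j i \<in> Rk k \<and> 0 \<le> r j i" "\<And>j. A \<subseteq> (\<Union>i. linf_cball k (x j i) (r j i))"
    "\<And>j. (\<Sum>i. ennreal (r j i powr m)) = ennreal (S j)" "\<And>j. 0 \<le> S j" "\<And>j. S j < v j"
proof -
  define P where "P j xrS \<longleftrightarrow> (\<forall>i. fst xrS i \<in> Rk k \<and> 0 \<le> fst (snd xrS) i)
      \<and> A \<subseteq> (\<Union>i. linf_cball k (fst xrS i) (fst (snd xrS) i))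
      \<and> (\<Sum>i. ennreal (fst (snd xrS) i powr m)) = ennreal (snd (snd xrS))
      \<and> 0 \<le> snd (snd xrS) \<and> snd (snd xrS) < v j" for j xrS
  have "\<exists>xrS. P j xrS" for j
  proof -
    obtain x r S where "\<forall>i. x i \<in> Rk k \<and> 0 \<le> r i" "A \<subseteq> (\<Union>i. linf_cball k (x i) (r i))"
      "(\<Sum>i. ennreal (r i powr m)) = ennreal S" "0 \<le> S" "S < v j"
      by (rule HC_less_imp_cover[OF assms])
    then show ?thesis unfolding P_def by (intro exI[of _ "(x, r, S)"]) simp
  qed
  then obtain xrS where "\<forall>j. P j (xrS j)" using choice[of P] by blast
  then show ?thesis
    by (intro that[of "\<lambda>j. fst (xrS j)" "\<lambda>j. fst (snd (xrS j))" "\<lambda>j. snd (snd (xrS j))"]) (simp_all add: P_def)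
qed

lemma HC_cube_le: "0 < s \<Longrightarrow> c \<in> Rk k \<Longrightarrow> HC k m (cube k c s) \<le> ennreal (s powr m)"
proof -
  assume s: "0 < s" and c: "c \<in> Rk k"
  have "HC k m (cube k c s) \<le> (\<Sum>i. ennreal ((if i = 0 then s else 0) powr m))"
    using s c by (intro HC_le_cover[where z = "\<lambda>_. c"])
      (auto simp: cube_def linf_cball_def intro!: exI[of _ 0])
  also have "\<dots> = ennreal (s powr m)"
    by (subst suminf_finite[of "{0}"]) auto
  finally show ?thesis .
qed

text \<open>The value \<open>\<infinity>\<close> at the singularity matters: Isabelle's \<open>0 powr _ = 0\<close> would
  break the lower bound \<open>powr_le_prod_sing_weight\<close>.\<close>

definition sing_weight :: "real \<Rightarrow> real \<Rightarrow> ennreal" where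
  "sing_weight \<alpha> t = (if t = 0 then \<infinity> else ennreal (\<bar>t\<bar> powr (- \<alpha>)))"

lemma powr_le_prod_sing_weight:
  assumes "0 \<le> \<alpha>" "0 < d" "\<forall>j<k. \<bar>u j\<bar> \<le> d"
  shows "ennreal (d powr (- (real k * \<alpha>))) \<le> (\<Prod>j<k. sing_weight \<alpha> (u j))"
proof -
  have "ennreal (d powr (- (real k * \<alpha>))) = (\<Prod>j<k. ennreal (d powr (- \<alpha>)))"
    using assms(2) by (simp add: prod_constant ennreal_power powr_realpow[symmetric] powr_powr mult.commute)
  also have "\<dots> \<le> (\<Prod>j<k. sing_weight \<alpha> (u j))"
    using assms by (intro prod_mono_ennreal) (auto simp: sing_weight_def intro!: ennreal_leI powr_mono2')
  finally show ?thesis .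
qed

lemma scaled_radius_powr_le_sing_weight:
  assumes "0 < k" "0 < m" "0 \<le> a" "0 \<le> r" "0 < d" "\<forall>j<k. \<bar>u j\<bar> \<le> d"
  shows "ennreal ((a * r / d) powr m) \<le> ennreal (a powr m) * (ennreal (r powr m) * (\<Prod>j<k. sing_weight (m / real k) (u j)))"
proof -
  have "(a * r / d) powr m = a powr m * r powr m * d powr (- (real k * (m / real k)))"
    using assms by (simp add: powr_divide powr_mult powr_minus_divide)
  moreover have "ennreal (d powr (- (real k * (m / real k)))) \<le> (\<Prod>j<k. sing_weight (m / real k) (u j))"
    using assms by (intro powr_le_prod_sing_weight) auto
  ultimately show ?thesis
    using assms by (simp add: ennreal_mult mult.assoc mult_left_mono)
qed

text \<open>Since the \<open>\<ell>\<^sup>\<infinity>\<close> distance \<open>d\<^sub>i\<close> from \<open>q\<close> to \<open>x\<^sub>i\<close> satisfies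
  \<open>d\<^sub>i\<^sup>-\<^sup>m \<le> \<Prod>\<^sub>j \<bar>q\<^sub>j - x\<^sub>i\<^sub>j\<bar>\<^sup>-\<^sup>m\<^sup>/\<^sup>k\<close>, this dominates \<open>\<Sum>\<^sub>i (r\<^sub>i / d\<^sub>i)\<^sup>m\<close>; unlike the latter,
  it is integrable in \<open>q\<close> because \<open>m / k < 1\<close>.\<close>

definition cover_weight ::
  "nat \<Rightarrow> real \<Rightarrow> (nat \<Rightarrow> nat \<Rightarrow> real) \<Rightarrow> (nat \<Rightarrow> real) \<Rightarrow> (nat \<Rightarrow> real) \<Rightarrow> ennreal" where
  "cover_weight k m x r q = (\<Sum>i. ennreal (r i powr m) * (\<Prod>j<k. sing_weight (m / real k) (q j - x i j)))"

lemma exists_max_abs_coordinate: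
  fixes u :: "nat \<Rightarrow> real"
  assumes "0 < k"
  shows "\<exists>j0<k. \<forall>j<k. \<bar>u j\<bar> \<le> \<bar>u j0\<bar>"
proof -
  have "Max ((\<lambda>j. \<bar>u j\<bar>) ` {..<k}) \<in> (\<lambda>j. \<bar>u j\<bar>) ` {..<k}"
    using assms by (intro Max_in) auto
  then obtain j0 where "j0 < k" "Max ((\<lambda>j. \<bar>u j\<bar>) ` {..<k}) = \<bar>u j0\<bar>" by auto
  moreover have "\<bar>u j\<bar> \<le> Max ((\<lambda>j. \<bar>u j\<bar>) ` {..<k})" if "j < k" for j
    using that by (intro Max_ge) auto
  ultimately show ?thesis by auto
qed

lemma HC_radproj_le_cover_weight:
  assumes k: "0 < k" and s: "0 < s" and m: "0 < m" and p: "p \<in> cube k c (s / 2)"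
    and cover: "\<forall>i. x i \<in> Rk k \<and> 0 \<le> r i" "X \<subseteq> (\<Union>i. linf_cball k (x i) (r i))"
    and far: "\<forall>i. \<exists>j<k. 2 * r i < \<bar>p j - x i j\<bar>"
  shows "HC k m (radproj k c s p ` X) \<le> ennreal ((24 * s) powr m) * cover_weight k m x r p"
proof -
  define j0 where "j0 i = (SOME j0. j0 < k \<and> (\<forall>j<k. \<bar>p j - x i j\<bar> \<le> \<bar>p j0 - x i j0\<bar>))" for i
  have "j0 i < k \<and> (\<forall>j<k. \<bar>p j - x i j\<bar> \<le> \<bar>p (j0 i) - x i (j0 i)\<bar>)" for i
    unfolding j0_def by (rule someI_ex) (rule exists_max_abs_coordinate[OF k])
  then have j0: "\<And>i. j0 i < k" "\<And>i j. j < k \<Longrightarrow> \<bar>p j - x i j\<bar> \<le> \<bar>p (j0 i) - x i (j0 i)\<bar>"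
    by auto
  define d where "d i = \<bar>p (j0 i) - x i (j0 i)\<bar>" for i
  have far_d: "2 * r i < d i" for i
  proof -
    obtain j where "j < k" "2 * r i < \<bar>p j - x i j\<bar>" using far by blast
    with j0(2)[of j i] show ?thesis by (simp add: d_def)
  qed
  have d: "0 < d i" for i using far_d[of i] cover(1) by (smt (verit))
  have proj_in_Rk: "radproj k c s p (x i) \<in> Rk k" for i
  proof -
    have "x i \<noteq> p" using d[of i] by (auto simp: d_def)
    then show ?thesis
      using cover(1) cube_half_subset_cube_int[OF s] p by (intro radproj_in_Rk[OF k]) auto
  qed
  have center_in_ball: "x i \<in> linf_cball k (x i) (r i)" for i
    using cover(1) by (simp add: linf_cball_def)
  have "HC k m (radproj k c s p ` X) \<le> (\<Sum>i. ennreal ((24 * s * r i / d i) powr m))"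
  proof (rule HC_le_cover)
    have "0 \<le> 24 * s * r i / d i" for i
      using cover(1) d[of i] s by simp
    then show "\<forall>i. radproj k c s p (x i) \<in> Rk k \<and> 0 \<le> 24 * s * r i / d i"
      using proj_in_Rk by blast
    show "radproj k c s p ` X \<subseteq> (\<Union>i. linf_cball k (radproj k c s p (x i)) (24 * s * r i / d i))"
    proof
      fix w assume "w \<in> radproj k c s p ` X"
      then obtain y i where "y \<in> linf_cball k (x i) (r i)" "w = radproj k c s p y"
        using cover(2) by blast
      moreover have "radproj k c s p ` linf_cball k (x i) (r i)
          \<subseteq> linf_cball k (radproj k c s p (x i)) (24 * s * r i / d i)"
        unfolding d_def
        by (rule radproj_image_cball_subset[OF k s p j0(1) far_d[of i, unfolded d_def] center_in_ball])
      ultimately show "w \<in> (\<Union>i. linf_cball k (radproj k c s p (x i)) (24 * s * r i / d i))"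
        by blast
    qed
  qed
  also have "\<dots> \<le> (\<Sum>i. ennreal ((24 * s) powr m) * (ennreal (r i powr m) * (\<Prod>j<k. sing_weight (m / real k) (p j - x i j))))"
  proof (rule suminf_le)
    show "ennreal ((24 * s * r i / d i) powr m)
        \<le> ennreal ((24 * s) powr m) * (ennreal (r i powr m) * (\<Prod>j<k. sing_weight (m / real k) (p j - x i j)))" for i
      using cover(1) d[of i] s j0(2)[of _ i] by (intro scaled_radius_powr_le_sing_weight[OF k m]) (auto simp: d_def)
  qed auto
  also have "\<dots> = ennreal ((24 * s) powr m) * cover_weight k m x r p"
    by (simp add: cover_weight_def)
  finally show ?thesis .
qed

section \<open>Integrals of the singular weight\<close>

lemma nn_integral_abs_powr_0_l:
  assumes "0 \<le> \<alpha>" "\<alpha> < 1" "0 < l"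
  shows "(\<integral>\<^sup>+ t. ennreal (\<bar>t\<bar> powr (- \<alpha>)) * indicator {0..l} t \<partial>lborel) = ennreal (l powr (1 - \<alpha>) / (1 - \<alpha>))"
proof -
  have "((\<lambda>t. t powr (- \<alpha>)) has_integral (l powr (- \<alpha> + 1) / (- \<alpha> + 1))) {0..l}"
    using assms by (intro has_integral_powr_from_0) auto
  then have "(\<integral>\<^sup>+ t. ennreal (indicator {0..l} t * t powr (- \<alpha>)) \<partial>lborel) = ennreal (l powr (1 - \<alpha>) / (1 - \<alpha>))"
    by (subst nn_integral_has_integral_lebesgue) (auto simp: add.commute)
  moreover have "(\<integral>\<^sup>+ t. ennreal (\<bar>t\<bar> powr (- \<alpha>)) * indicator {0..l} t \<partial>lborel) =
      (\<integral>\<^sup>+ t. ennreal (indicator {0..l} t * t powr (- \<alpha>)) \<partial>lborel)"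
    by (intro nn_integral_cong) (auto simp: indicator_def)
  ultimately show ?thesis by simp
qed

lemma nn_integral_abs_powr_centered:
  assumes "0 \<le> \<alpha>" "\<alpha> < 1" "0 < l"
  shows "(\<integral>\<^sup>+ t. ennreal (\<bar>t - x\<bar> powr (- \<alpha>)) * indicator {x - l..x + l} t \<partial>lborel)
    \<le> ennreal (2 * (l powr (1 - \<alpha>) / (1 - \<alpha>)))"
proof -
  let ?f = "\<lambda>t. ennreal (\<bar>t\<bar> powr (- \<alpha>))"
  have "(\<integral>\<^sup>+ t. ennreal (\<bar>t - x\<bar> powr (- \<alpha>)) * indicator {x - l..x + l} t \<partial>lborel)
      = (\<integral>\<^sup>+ t. ?f t * indicator {- l..l} t \<partial>lborel)"
    using nn_integral_real_affine[of "\<lambda>t. ennreal (\<bar>t - x\<bar> powr (- \<alpha>)) * indicator {x - l..x + l} t" 1 x]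
    by (simp add: indicator_def)
  also have "\<dots> \<le> (\<integral>\<^sup>+ t. ?f t * indicator {0..l} t + ?f t * indicator {- l..0} t \<partial>lborel)"
    by (intro nn_integral_mono) (auto simp: indicator_def)
  also have "\<dots> = (\<integral>\<^sup>+ t. ?f t * indicator {0..l} t \<partial>lborel) + (\<integral>\<^sup>+ t. ?f t * indicator {- l..0} t \<partial>lborel)"
    by (intro nn_integral_add) auto
  also have "(\<integral>\<^sup>+ t. ?f t * indicator {- l..0} t \<partial>lborel) = (\<integral>\<^sup>+ t. ?f t * indicator {0..l} t \<partial>lborel)"
    using nn_integral_real_affine[of "\<lambda>t. ?f t * indicator {- l..0} t" "-1" 0]
    by (simp add: indicator_def conj_commute)
  also have "(\<integral>\<^sup>+ t. ?f t * indicator {0..l} t \<partial>lborel) + \<dots> = ennreal (2 * (l powr (1 - \<alpha>) / (1 - \<alpha>)))"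
    using assms by (simp add: nn_integral_abs_powr_0_l ennreal_plus[symmetric] del: ennreal_plus)
  finally show ?thesis .
qed

definition sing_weight_const :: "real \<Rightarrow> real" where
  "sing_weight_const \<alpha> = 2 / (1 - \<alpha>) + 1"

lemma sing_weight_const_pos: "\<alpha> < 1 \<Longrightarrow> 0 < sing_weight_const \<alpha>"
  unfolding sing_weight_const_def by (simp add: add_pos_nonneg)

text \<open>Split into the part within distance \<open>b - a\<close> of the singularity and the rest, where the
  weight is at most \<open>(b - a)\<^sup>-\<^sup>\<alpha>\<close>.\<close>

lemma nn_integral_sing_weight_interval:
  assumes \<alpha>: "0 \<le> \<alpha>" "\<alpha> < 1" and ab: "a < b"
  shows "(\<integral>\<^sup>+ t. sing_weight \<alpha> (t - x) * indicator {a..b} t \<partial>lborel)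
    \<le> ennreal (sing_weight_const \<alpha> * (b - a) powr (1 - \<alpha>))"
proof -
  define l where "l = b - a"
  have l: "0 < l" using ab by (simp add: l_def)
  have "(\<integral>\<^sup>+ t. sing_weight \<alpha> (t - x) * indicator {a..b} t \<partial>lborel) =
        (\<integral>\<^sup>+ t. ennreal (\<bar>t - x\<bar> powr (- \<alpha>)) * indicator {a..b} t \<partial>lborel)"
    by (intro nn_integral_cong_AE eventually_mono[OF AE_lborel_singleton[of x]]) (auto simp: sing_weight_def)
  also have "\<dots> \<le> (\<integral>\<^sup>+ t. ennreal (\<bar>t - x\<bar> powr (- \<alpha>)) * indicator {x - l..x + l} t
                      + ennreal (l powr (- \<alpha>)) * indicator {a..b} t \<partial>lborel)"
  proof (intro nn_integral_mono)
    fix t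
    have "\<bar>t - x\<bar> powr (- \<alpha>) \<le> l powr (- \<alpha>)" if "t \<notin> {x - l..x + l}"
      using that l \<alpha> by (intro powr_mono2') auto
    then show "ennreal (\<bar>t - x\<bar> powr (- \<alpha>)) * indicator {a..b} t
        \<le> ennreal (\<bar>t - x\<bar> powr (- \<alpha>)) * indicator {x - l..x + l} t + ennreal (l powr (- \<alpha>)) * indicator {a..b} t"
      by (cases "t \<in> {x - l..x + l}") (auto simp: indicator_def)
  qed
  also have "\<dots> = (\<integral>\<^sup>+ t. ennreal (\<bar>t - x\<bar> powr (- \<alpha>)) * indicator {x - l..x + l} t \<partial>lborel)
      + ennreal (l powr (- \<alpha>)) * ennreal l"
    using ab by (subst nn_integral_add) (auto simp: nn_integral_cmult_indicator l_def)
  also have "\<dots> \<le> ennreal (2 * (l powr (1 - \<alpha>) / (1 - \<alpha>))) + ennreal (l powr (1 - \<alpha>))"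
  proof (rule add_mono)
    show "ennreal (l powr (- \<alpha>)) * ennreal l \<le> ennreal (l powr (1 - \<alpha>))"
      using l by (simp add: ennreal_mult[symmetric] powr_diff powr_minus_divide)
  qed (rule nn_integral_abs_powr_centered[OF \<alpha> l])
  also have "\<dots> = ennreal (sing_weight_const \<alpha> * (b - a) powr (1 - \<alpha>))"
    using \<alpha> l by (simp add: sing_weight_const_def l_def algebra_simps flip: ennreal_plus)
  finally show ?thesis .
qed

abbreviation lborel_PiM :: "nat \<Rightarrow> (nat \<Rightarrow> real) measure" where
  "lborel_PiM k \<equiv> Pi\<^sub>M {..<k} (\<lambda>_. lborel)"

text \<open>The cube \<open>cube k c (s / 2)\<close> in the extensional representation carried by \<^const>\<open>PiM\<close>.\<close>

definition middle_box :: "nat \<Rightarrow> (nat \<Rightarrow> real) \<Rightarrow> real \<Rightarrow> (nat \<Rightarrow> real) set" where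
  "middle_box k c s = Pi\<^sub>E {..<k} (\<lambda>j. {c j - s / 2 .. c j + s / 2})"

definition double_box :: "nat \<Rightarrow> (nat \<Rightarrow> real) \<Rightarrow> real \<Rightarrow> (nat \<Rightarrow> real) set" where
  "double_box k x r = Pi\<^sub>E {..<k} (\<lambda>j. {x j - 2 * r .. x j + 2 * r})"

lemma middle_box_sets[measurable]: "middle_box k c s \<in> sets (lborel_PiM k)"
  unfolding middle_box_def by (intro sets_PiM_I_finite) auto

lemma double_box_sets[measurable]: "double_box k x r \<in> sets (lborel_PiM k)"
  unfolding double_box_def by (intro sets_PiM_I_finite) auto

lemma sing_weight_measurable[measurable]: "(\<lambda>t. sing_weight \<alpha> (t - x)) \<in> borel_measurable borel"
  unfolding sing_weight_def by measurable

lemma cover_weight_measurable[measurable]: "cover_weight k m x r \<in> borel_measurable (lborel_PiM k)"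
  unfolding cover_weight_def by measurable

lemma emeasure_PiM_lborel_box:
  assumes "\<And>j. j < k \<Longrightarrow> a j \<le> b j"
  shows "emeasure (lborel_PiM k) (Pi\<^sub>E {..<k} (\<lambda>j. {a j .. b j})) = ennreal (\<Prod>j<k. b j - a j)"
proof -
  interpret product_sigma_finite "\<lambda>_. lborel :: real measure" by standard
  have "emeasure (lborel_PiM k) (Pi\<^sub>E {..<k} (\<lambda>j. {a j .. b j})) = (\<Prod>j<k. emeasure lborel {a j .. b j})"
    by (rule emeasure_PiM) auto
  also have "\<dots> = (\<Prod>j<k. ennreal (b j - a j))"
    using assms by (intro prod.cong) auto
  also have "\<dots> = ennreal (\<Prod>j<k. b j - a j)"
    by (rule prod_ennreal) (use assms in auto)
  finally show ?thesis .
qed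

lemma emeasure_middle_box: "0 < s \<Longrightarrow> emeasure (lborel_PiM k) (middle_box k c s) = ennreal (s ^ k)"
  unfolding middle_box_def by (subst emeasure_PiM_lborel_box) auto

lemma emeasure_double_box: "0 \<le> r \<Longrightarrow> emeasure (lborel_PiM k) (double_box k x r) = ennreal ((4 * r) ^ k)"
  unfolding double_box_def by (subst emeasure_PiM_lborel_box) auto

lemma nn_integral_prod_sing_weight_middle_box:
  assumes \<alpha>: "0 \<le> \<alpha>" "\<alpha> < 1" and s: "0 < s"
  shows "(\<integral>\<^sup>+ q. (\<Prod>j<k. sing_weight \<alpha> (q j - x j)) * indicator (middle_box k c s) q \<partial>lborel_PiM k)
     \<le> ennreal ((sing_weight_const \<alpha> * s powr (1 - \<alpha>)) ^ k)"
proof -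
  interpret product_sigma_finite "\<lambda>_. lborel :: real measure" by standard
  let ?I = "\<lambda>j. {c j - s / 2 .. c j + s / 2}"
  have "(\<integral>\<^sup>+ q. (\<Prod>j<k. sing_weight \<alpha> (q j - x j)) * indicator (middle_box k c s) q \<partial>lborel_PiM k)
      = (\<integral>\<^sup>+ q. (\<Prod>j<k. sing_weight \<alpha> (q j - x j) * indicator (?I j) (q j)) \<partial>lborel_PiM k)"
  proof (intro nn_integral_cong)
    fix q assume "q \<in> space (lborel_PiM k)"
    then have "q \<in> middle_box k c s \<longleftrightarrow> (\<forall>j<k. q j \<in> ?I j)"
      by (auto simp: middle_box_def space_PiM PiE_iff)
    then show "(\<Prod>j<k. sing_weight \<alpha> (q j - x j)) * indicator (middle_box k c s) q
        = (\<Prod>j<k. sing_weight \<alpha> (q j - x j) * indicator (?I j) (q j))"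
      by (auto simp: prod.distrib indicator_def)
  qed
  also have "\<dots> = (\<Prod>j<k. \<integral>\<^sup>+ t. sing_weight \<alpha> (t - x j) * indicator (?I j) t \<partial>lborel)"
    by (rule product_nn_integral_prod) auto
  also have "\<dots> \<le> (\<Prod>j<k. ennreal (sing_weight_const \<alpha> * s powr (1 - \<alpha>)))"
  proof (rule prod_mono_ennreal)
    fix j
    show "(\<integral>\<^sup>+ t. sing_weight \<alpha> (t - x j) * indicator (?I j) t \<partial>lborel)
        \<le> ennreal (sing_weight_const \<alpha> * s powr (1 - \<alpha>))"
      using nn_integral_sing_weight_interval[OF \<alpha>, of "c j - s / 2" "c j + s / 2" "x j"] s by simp
  qed
  also have "\<dots> = ennreal ((sing_weight_const \<alpha> * s powr (1 - \<alpha>)) ^ k)"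
    using sing_weight_const_pos[OF \<alpha>(2)] by (simp add: ennreal_power prod_constant)
  finally show ?thesis .
qed

lemma nn_integral_cover_weight_middle_box:
  assumes m: "0 < m" "m < real k" and s: "0 < s"
  shows "(\<integral>\<^sup>+ q. cover_weight k m x r q * indicator (middle_box k c s) q \<partial>lborel_PiM k)
     \<le> ennreal (sing_weight_const (m / real k) ^ k * s powr (real k - m)) * (\<Sum>i. ennreal (r i powr m))"
proof -
  have \<alpha>: "0 \<le> m / real k" "m / real k < 1" using m by auto
  have "(s powr (1 - m / real k)) ^ k = s powr ((1 - m / real k) * real k)"
    using s by (simp add: powr_realpow[symmetric] powr_powr)
  also have "(1 - m / real k) * real k = real k - m"
    using m by (simp add: field_simps)
  finally have const: "ennreal ((sing_weight_const (m / real k) * s powr (1 - m / real k)) ^ k)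
      = ennreal (sing_weight_const (m / real k) ^ k * s powr (real k - m))"
    by (simp add: power_mult_distrib)
  have "(\<integral>\<^sup>+ q. cover_weight k m x r q * indicator (middle_box k c s) q \<partial>lborel_PiM k)
      = (\<integral>\<^sup>+ q. (\<Sum>i. ennreal (r i powr m) * ((\<Prod>j<k. sing_weight (m / real k) (q j - x i j))
            * indicator (middle_box k c s) q)) \<partial>lborel_PiM k)"
    unfolding cover_weight_def
    by (intro nn_integral_cong) (simp add: mult.assoc ennreal_suminf_multc[symmetric] del: ennreal_suminf_multc)
  also have "\<dots> = (\<Sum>i. ennreal (r i powr m) * \<integral>\<^sup>+ q. (\<Prod>j<k. sing_weight (m / real k) (q j - x i j))
            * indicator (middle_box k c s) q \<partial>lborel_PiM k)"
    by (subst nn_integral_suminf) (measurable, simp add: nn_integral_cmult)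
  also have "\<dots> \<le> (\<Sum>i. ennreal (r i powr m) * ennreal ((sing_weight_const (m / real k) * s powr (1 - m / real k)) ^ k))"
    by (intro suminf_le mult_left_mono nn_integral_prod_sing_weight_middle_box \<alpha> s) auto
  also have "\<dots> = ennreal (sing_weight_const (m / real k) ^ k * s powr (real k - m)) * (\<Sum>i. ennreal (r i powr m))"
    by (simp add: const mult.commute)
  finally show ?thesis .
qed

lemma emeasure_Union_double_box_le:
  assumes m: "0 < m" "m < real k" and r: "\<forall>i. 0 \<le> r i"
    and S: "(\<Sum>i. ennreal (r i powr m)) = ennreal S" "0 \<le> S"
  shows "emeasure (lborel_PiM k) (\<Union>i. double_box k (x i) (r i)) \<le> ennreal (4 ^ k * S powr (real k / m))"
proof -
  have box_le: "(4 * r i) ^ k \<le> 4 ^ k * S powr ((real k - m) / m) * r i powr m" for i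
  proof (cases "r i = 0")
    case True
    have "0 < k" using m by simp
    with True show ?thesis using S(2) by (simp add: zero_power)
  next
    case False
    then have ri: "0 < r i" using r by (simp add: less_le)
    have "ennreal (r i powr m) \<le> ennreal S"
      using sum_le_suminf[of "\<lambda>i. ennreal (r i powr m)" "{i}"] S(1) by simp
    then have "r i powr m \<le> S" using S(2) by simp
    then have "r i \<le> S powr (1 / m)"
      using powr_mono2[of "1 / m" "r i powr m" S] ri m by (simp add: powr_powr)
    then have "r i powr (real k - m) \<le> S powr ((real k - m) / m)"
      using powr_mono2[of "real k - m" "r i" "S powr (1 / m)"] ri m by (simp add: powr_powr)
    moreover have "r i ^ k = r i powr m * r i powr (real k - m)"
      using ri by (simp add: powr_realpow[symmetric] powr_add[symmetric])
    ultimately show ?thesis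
      using ri by (simp add: power_mult_distrib mult_left_mono mult.commute mult.left_commute)
  qed
  have "emeasure (lborel_PiM k) (\<Union>i. double_box k (x i) (r i)) \<le> (\<Sum>i. emeasure (lborel_PiM k) (double_box k (x i) (r i)))"
    by (intro emeasure_subadditive_countably) auto
  also have "\<dots> = (\<Sum>i. ennreal ((4 * r i) ^ k))"
    using r by (simp add: emeasure_double_box)
  also have "\<dots> \<le> (\<Sum>i. ennreal (4 ^ k * S powr ((real k - m) / m)) * ennreal (r i powr m))"
    using box_le S(2) by (intro suminf_le) (auto simp: ennreal_mult[symmetric])
  also have "\<dots> = ennreal (4 ^ k * S powr ((real k - m) / m) * S)"
    using S by (simp add: ennreal_mult)
  also have "4 ^ k * S powr ((real k - m) / m) * S = 4 ^ k * S powr (real k / m)"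
    using m S(2) by (cases "S = 0") (simp_all add: diff_divide_distrib powr_diff)
  finally show ?thesis .
qed

section \<open>Choice of the centre\<close>

lemma le_ennreal_if_inverse_mult_less_1:
  fixes F :: ennreal
  assumes "0 \<le> T" "inverse (ennreal T) * F < 1"
  shows "F \<le> ennreal T"
proof (cases "T = 0")
  case True
  with assms(2) have "F = 0" by (auto simp: ennreal_top_mult split: if_splits)
  then show ?thesis by simp
next
  case False
  with assms(1) have T: "0 < T" by simp
  show ?thesis
  proof (cases F)
    case (real f)
    with T assms(2) have "1 / T * f < 1"
      by (simp add: inverse_ennreal inverse_eq_divide ennreal_mult[symmetric] ennreal_less_iff)
    with T real show ?thesis by (simp add: field_simps)
  next
    case top
    with assms(2) T show ?thesis by (simp add: inverse_ennreal)
  qed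
qed

lemma suminf_ennreal_geometric_half: "0 \<le> A \<Longrightarrow> (\<Sum>j. ennreal (A * (1 / 2) ^ j)) = ennreal (2 * A)"
  using suminf_mult[of "\<lambda>j. (1 / 2 :: real) ^ j" A] suminf_geometric[of "1 / 2 :: real"]
  by (subst suminf_ennreal2) (auto intro: summable_mult summable_geometric)

lemma emeasure_cover_weight_large_le:
  assumes m: "0 < m" "m < real k" and s: "0 < s" and \<epsilon>: "0 < \<epsilon>"
    and S: "(\<Sum>i. ennreal (r i powr m)) = ennreal S" "0 \<le> S"
  defines "T \<equiv> sing_weight_const (m / real k) ^ k * S / (\<epsilon> * s powr m)"
  shows "emeasure (lborel_PiM k) {q \<in> middle_box k c s. 1 \<le> inverse (ennreal T) * cover_weight k m x r q}
    \<le> ennreal (\<epsilon> * s ^ k)"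
proof -
  let ?K = "sing_weight_const (m / real k) ^ k"
  have K1: "0 < sing_weight_const (m / real k)" using sing_weight_const_pos[of "m / real k"] m by simp
  then have K: "0 < ?K" by simp
  have "emeasure (lborel_PiM k) {q \<in> middle_box k c s. 1 \<le> inverse (ennreal T) * cover_weight k m x r q}
      \<le> inverse (ennreal T) * (\<integral>\<^sup>+ q. cover_weight k m x r q * indicator (middle_box k c s) q \<partial>lborel_PiM k)"
    by (rule nn_integral_Markov_inequality) measurable
  also have "\<dots> \<le> inverse (ennreal T) * ennreal (?K * s powr (real k - m) * S)"
    using nn_integral_cover_weight_middle_box[OF m s, of x r c] S(1) K s S(2)
    by (intro mult_left_mono) (simp_all add: ennreal_mult)
  also have "\<dots> \<le> ennreal (\<epsilon> * s ^ k)"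
  proof (cases "S = 0")
    case False
    with S(2) have "0 < S" by simp
    then have "inverse (ennreal T) * ennreal (?K * s powr (real k - m) * S)
        = ennreal (\<epsilon> * (s powr (real k - m) * s powr m))"
      using K1 s \<epsilon> by (simp add: T_def inverse_ennreal ennreal_mult[symmetric] field_simps)
    also have "s powr (real k - m) * s powr m = s ^ k"
      using s by (simp add: powr_add[symmetric] powr_realpow)
    finally show ?thesis by simp
  qed simp
  finally show ?thesis .
qed

definition scale_const :: "real \<Rightarrow> nat \<Rightarrow> real" where
  "scale_const m k = 8 * 24 powr m * sing_weight_const (m / real k) ^ k"

lemma scale_const_pos:
  assumes "m < real k"
  shows "0 < scale_const m k"
proof -
  have "m / real k < 1" using assms by (cases "k = 0") (auto simp: divide_less_eq)
  then show ?thesis unfolding scale_const_def using sing_weight_const_pos by simp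
qed

lemma ex_not_mem_if_emeasure_less:
  assumes "A \<in> sets M" "emeasure M A < emeasure M \<Omega>"
  shows "\<exists>q \<in> \<Omega>. q \<notin> A"
proof (rule ccontr)
  assume "\<not> ?thesis"
  then have "\<Omega> \<subseteq> A" by blast
  then have "emeasure M \<Omega> \<le> emeasure M A" using assms(1) by (rule emeasure_mono)
  with assms(2) show False by simp
qed

lemma emeasure_large_cover_weights_le:
  fixes x :: "nat \<Rightarrow> nat \<Rightarrow> nat \<Rightarrow> real" and r :: "nat \<Rightarrow> nat \<Rightarrow> real" and S :: "nat \<Rightarrow> real"
    and c :: "nat \<Rightarrow> real"
  assumes m: "0 < m" "m < real k" and s: "0 < s"
    and S: "\<And>j. (\<Sum>i. ennreal (r j i powr m)) = ennreal (S j)" "\<And>j. 0 \<le> S j"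
  defines "bad \<equiv> \<lambda>j. {q \<in> middle_box k c s. 1 \<le> inverse (ennreal
      (sing_weight_const (m / real k) ^ k * S j / ((1 / 2) ^ (j + 3) * s powr m))) * cover_weight k m (x j) (r j) q}"
  shows "(\<Union>j. bad j) \<in> sets (lborel_PiM k)" "emeasure (lborel_PiM k) (\<Union>j. bad j) \<le> ennreal (s ^ k / 4)"
proof -
  have bad_sets: "bad j \<in> sets (lborel_PiM k)" for j
  proof -
    have "bad j = middle_box k c s \<inter> {q \<in> space (lborel_PiM k). 1 \<le> inverse (ennreal
        (sing_weight_const (m / real k) ^ k * S j / ((1 / 2) ^ (j + 3) * s powr m))) * cover_weight k m (x j) (r j) q}"
      using sets.sets_into_space[OF middle_box_sets] by (auto simp: bad_def)
    also have "\<dots> \<in> sets (lborel_PiM k)" by measurable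
    finally show ?thesis .
  qed
  then show "(\<Union>j. bad j) \<in> sets (lborel_PiM k)" by (intro sets.countable_UN) auto
  have "emeasure (lborel_PiM k) (\<Union>j. bad j) \<le> (\<Sum>j. emeasure (lborel_PiM k) (bad j))"
    using bad_sets by (intro emeasure_subadditive_countably) auto
  also have "\<dots> \<le> (\<Sum>j. ennreal (s ^ k / 8 * (1 / 2) ^ j))"
  proof (rule suminf_le)
    fix j
    have "emeasure (lborel_PiM k) (bad j) \<le> ennreal ((1 / 2) ^ (j + 3) * s ^ k)"
      unfolding bad_def by (rule emeasure_cover_weight_large_le[OF m s _ S(1,2)]) simp
    also have "(1 / 2) ^ (j + 3) * s ^ k = s ^ k / 8 * (1 / 2 :: real) ^ j"
      by (simp add: power_add power_divide)
    finally show "emeasure (lborel_PiM k) (bad j) \<le> ennreal (s ^ k / 8 * (1 / 2) ^ j)" .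
  qed auto
  also have "\<dots> = ennreal (2 * (s ^ k / 8))"
    using s by (intro suminf_ennreal_geometric_half) simp
  also have "2 * (s ^ k / 8) = s ^ k / 4" by simp
  finally show "emeasure (lborel_PiM k) (\<Union>j. bad j) \<le> ennreal (s ^ k / 4)" .
qed

text \<open>Outside a set of measure \<open>< s\<^sup>k\<close> a centre in the middle box lies outside every
  \<^const>\<open>double_box\<close> of every cover, and by Markov's inequality the \<open>j\<close>-th \<^const>\<open>cover_weight\<close>
  exceeds \<open>2\<^sup>j\<^sup>+\<^sup>3\<close> times its mean only on a set of measure \<open>s\<^sup>k / 2\<^sup>j\<^sup>+\<^sup>3\<close>.\<close>

lemma exists_middle_point_small_cover_weights:
  fixes x :: "nat \<Rightarrow> nat \<Rightarrow> nat \<Rightarrow> real" and r :: "nat \<Rightarrow> nat \<Rightarrow> real" and S :: "nat \<Rightarrow> real"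
  assumes m: "0 < m" "m < real k" and s: "0 < s"
    and S: "\<And>j. (\<Sum>i. ennreal (r j i powr m)) = ennreal (S j)" "\<And>j. 0 \<le> S j"
    and boxes: "emeasure (lborel_PiM k) (\<Union>j. \<Union>i. double_box k (x j i) (r j i)) \<le> ennreal (s ^ k / 2)"
  defines "T \<equiv> \<lambda>j. sing_weight_const (m / real k) ^ k * S j / ((1 / 2) ^ (j + 3) * s powr m)"
  shows "\<exists>q \<in> middle_box k c s - (\<Union>j. \<Union>i. double_box k (x j i) (r j i)).
    \<forall>j. cover_weight k m (x j) (r j) q \<le> ennreal (T j)"
proof -
  define bad where "bad j = {q \<in> middle_box k c s. 1 \<le> inverse (ennreal (T j)) * cover_weight k m (x j) (r j) q}" for j
  define B where "B = (\<Union>j. bad j) \<union> (\<Union>j. \<Union>i. double_box k (x j i) (r j i))"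
  have bad: "(\<Union>j. bad j) \<in> sets (lborel_PiM k)" "emeasure (lborel_PiM k) (\<Union>j. bad j) \<le> ennreal (s ^ k / 4)"
    unfolding bad_def T_def by (rule emeasure_large_cover_weights_le[OF m s S])+
  have box_Union_sets: "(\<Union>j. \<Union>i. double_box k (x j i) (r j i)) \<in> sets (lborel_PiM k)"
    by (intro sets.countable_UN) auto
  have "emeasure (lborel_PiM k) B
      \<le> emeasure (lborel_PiM k) (\<Union>j. bad j) + emeasure (lborel_PiM k) (\<Union>j. \<Union>i. double_box k (x j i) (r j i))"
    unfolding B_def using bad(1) box_Union_sets by (rule emeasure_subadditive)
  also have "\<dots> \<le> ennreal (s ^ k / 4) + ennreal (s ^ k / 2)"
    using bad(2) boxes by (rule add_mono)
  also have "\<dots> < emeasure (lborel_PiM k) (middle_box k c s)"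
    using s by (simp add: emeasure_middle_box ennreal_less_iff flip: ennreal_plus)
  finally obtain q where q: "q \<in> middle_box k c s" "q \<notin> B"
    using ex_not_mem_if_emeasure_less[of B] bad(1) box_Union_sets unfolding B_def by blast
  have "0 \<le> T j" for j
    using S(2)[of j] sing_weight_const_pos[of "m / real k"] m s by (simp add: T_def)
  then have "cover_weight k m (x j) (r j) q \<le> ennreal (T j)" for j
    using q by (intro le_ennreal_if_inverse_mult_less_1) (auto simp: B_def bad_def not_le)
  moreover have "q \<in> middle_box k c s - (\<Union>j. \<Union>i. double_box k (x j i) (r j i))"
    using q by (simp add: B_def)
  ultimately show ?thesis by blast
qed

lemma restrict_middle_box_in_cube:
  assumes "q \<in> middle_box k c s"
  shows "(\<lambda>i. if i < k then q i else 0) \<in> cube k c (s / 2)"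
proof -
  have "\<bar>q j - c j\<bar> \<le> s / 2" if "j < k" for j
  proof -
    have "c j - s / 2 \<le> q j" "q j \<le> c j + s / 2"
      using assms that by (simp_all add: middle_box_def PiE_iff)
    then show ?thesis by arith
  qed
  then show ?thesis by (simp add: cube_def Rk_def)
qed

lemma far_coordinate_if_not_in_double_box:
  assumes "q \<in> middle_box k c s" "q \<notin> double_box k x r"
  shows "\<exists>l<k. 2 * r < \<bar>q l - x l\<bar>"
proof -
  have "q \<in> extensional {..<k}" using assms(1) by (simp add: middle_box_def PiE_def)
  with assms(2) have "\<exists>l<k. \<not> (x l - 2 * r \<le> q l \<and> q l \<le> x l + 2 * r)"
    unfolding double_box_def PiE_def Pi_def by auto
  then obtain l where l: "l < k" "\<not> (x l - 2 * r \<le> q l \<and> q l \<le> x l + 2 * r)" by blast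
  then have "2 * r < \<bar>q l - x l\<bar>" by auto
  with l(1) show ?thesis by blast
qed

lemma exists_good_center:
  fixes x :: "nat \<Rightarrow> nat \<Rightarrow> nat \<Rightarrow> real" and r :: "nat \<Rightarrow> nat \<Rightarrow> real" and S :: "nat \<Rightarrow> real"
  assumes m: "0 < m" "m < real k" and s: "0 < s"
    and cover: "\<And>j. \<forall>i. x j i \<in> Rk k \<and> 0 \<le> r j i" "\<And>j. X \<subseteq> (\<Union>i. linf_cball k (x j i) (r j i))"
    and S: "\<And>j. (\<Sum>i. ennreal (r j i powr m)) = ennreal (S j)" "\<And>j. 0 \<le> S j"
    and boxes: "emeasure (lborel_PiM k) (\<Union>j. \<Union>i. double_box k (x j i) (r j i)) \<le> ennreal (s ^ k / 2)"
  shows "\<exists>p \<in> cube k c (s / 2) - X. \<forall>j. HC k m (radproj k c s p ` X) \<le> ennreal (scale_const m k * 2 ^ j * S j)"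
proof -
  have k: "0 < k" using m by simp
  define T where "T j = sing_weight_const (m / real k) ^ k * S j / ((1 / 2) ^ (j + 3) * s powr m)" for j
  have T: "0 \<le> T j" for j
    using S(2)[of j] sing_weight_const_pos[of "m / real k"] m s by (simp add: T_def)
  obtain q where q: "q \<in> middle_box k c s" "q \<notin> (\<Union>j. \<Union>i. double_box k (x j i) (r j i))"
    and small: "\<And>j. cover_weight k m (x j) (r j) q \<le> ennreal (T j)"
    using exists_middle_point_small_cover_weights[where x = x and r = r and S = S and c = c, OF m s S boxes]
    unfolding T_def by blast
  define p where "p = (\<lambda>i. if i < k then q i else 0)"
  have p: "p \<in> cube k c (s / 2)"
    unfolding p_def by (rule restrict_middle_box_in_cube[OF q(1)])
  have far: "\<forall>i. \<exists>l<k. 2 * r j i < \<bar>p l - x j i l\<bar>" for j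
  proof
    fix i
    obtain l where "l < k" "2 * r j i < \<bar>q l - x j i l\<bar>"
      using far_coordinate_if_not_in_double_box[OF q(1)] q(2) by blast
    then show "\<exists>l<k. 2 * r j i < \<bar>p l - x j i l\<bar>" by (auto simp: p_def)
  qed
  have "p \<notin> X"
  proof
    assume "p \<in> X"
    then obtain i where "p \<in> linf_cball k (x 0 i) (r 0 i)" using cover(2) by blast
    moreover obtain l where "l < k" "2 * r 0 i < \<bar>p l - x 0 i l\<bar>" using far by blast
    ultimately show False using cover(1)[of 0] by (force simp: linf_cball_def)
  qed
  moreover have "HC k m (radproj k c s p ` X) \<le> ennreal (scale_const m k * 2 ^ j * S j)" for j
  proof -
    have "HC k m (radproj k c s p ` X) \<le> ennreal ((24 * s) powr m) * cover_weight k m (x j) (r j) p"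
      by (rule HC_radproj_le_cover_weight[OF k s m(1) p cover(1)[of j] cover(2)[of j] far[of j]])
    also have "cover_weight k m (x j) (r j) p = cover_weight k m (x j) (r j) q"
      by (simp add: cover_weight_def p_def)
    also have "\<dots> \<le> ennreal (T j)" by (rule small)
    also have "ennreal ((24 * s) powr m) * ennreal (T j) = ennreal (scale_const m k * 2 ^ j * S j)"
      using s T by (simp add: ennreal_mult[symmetric] T_def scale_const_def powr_mult power_add field_simps)
    finally show ?thesis by (simp add: mult_left_mono)
  qed
  ultimately show ?thesis using p by blast
qed

lemma four_pow_mult_div_64_pow_le:
  assumes "0 < k" "0 \<le> s"
  shows "4 ^ k * (s / 64) ^ k \<le> (s :: real) ^ k / 16"
proof -
  have "4 ^ k * (s / 64) ^ k = s ^ k / 16 ^ k"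
    unfolding power_mult_distrib[symmetric] power_divide[symmetric] by simp
  moreover have "(16 :: real) \<le> 16 ^ k"
    using power_increasing[of 1 k "16 :: real"] assms(1) by simp
  then have "s ^ k / 16 ^ k \<le> s ^ k / 16"
    using assms(2) by (intro divide_left_mono) auto
  ultimately show ?thesis by simp
qed
lemma emeasure_Union_double_box_le_small:
  assumes m: "0 < m" "m < real k" and s: "0 < s" and r: "\<forall>i. 0 \<le> r i"
    and S: "(\<Sum>i. ennreal (r i powr m)) = ennreal S" "0 \<le> S" "S \<le> (s / 64) powr m * t"
    and t: "0 \<le> t" "t \<le> 1"
  shows "emeasure (lborel_PiM k) (\<Union>i. double_box k (x i) (r i)) \<le> ennreal (s ^ k / 16 * t)"
proof -
  have k: "0 < k" using m by simp
  have "S powr (real k / m) \<le> ((s / 64) powr m * t) powr (real k / m)"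
    using S(2,3) m by (intro powr_mono2) auto
  also have "\<dots> = (s / 64) ^ k * t powr (real k / m)"
    using s m t by (simp add: powr_mult powr_powr powr_realpow)
  also have "t powr (real k / m) \<le> t"
    using m t by (cases "t = 0") (auto intro!: powr_le_one_le)
  finally have "S powr (real k / m) \<le> (s / 64) ^ k * t"
    using s by (simp add: mult_left_mono)
  then have "4 ^ k * S powr (real k / m) \<le> 4 ^ k * (s / 64) ^ k * t"
    by (simp add: mult.assoc)
  also have "\<dots> \<le> s ^ k / 16 * t"
    using four_pow_mult_div_64_pow_le[OF k, of s] s t by (intro mult_right_mono) auto
  finally show ?thesis
    using emeasure_Union_double_box_le[OF m r S(1,2), of x] by (blast intro: order_trans ennreal_leI)
qed

lemma exists_center_radproj_HC_zero:
  assumes m: "0 < m" "m < real k" and s: "0 < s" and X: "HC k m X = 0"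
  shows "\<exists>p \<in> cube k c (s / 2) - X. HC k m (radproj k c s p ` X) = 0"
proof -
  define \<sigma> where "\<sigma> = (s / 64) powr m"
  have \<sigma>: "0 < \<sigma>" using s by (simp add: \<sigma>_def)
  have "HC k m X < ennreal (\<sigma> * (1 / 4) ^ j)" for j using X \<sigma> by simp
  then obtain x r S where cover: "\<And>j. \<forall>i. x j i \<in> Rk k \<and> 0 \<le> r j i" "\<And>j. X \<subseteq> (\<Union>i. linf_cball k (x j i) (r j i))"
    and S: "\<And>j. (\<Sum>i. ennreal (r j i powr m)) = ennreal (S j)" "\<And>j. 0 \<le> S j" "\<And>j. S j < \<sigma> * (1 / 4) ^ j"
    by (rule HC_less_imp_covers[where v = "\<lambda>j. \<sigma> * (1 / 4) ^ j"]) blast+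
  have "emeasure (lborel_PiM k) (\<Union>j. \<Union>i. double_box k (x j i) (r j i))
      \<le> (\<Sum>j. emeasure (lborel_PiM k) (\<Union>i. double_box k (x j i) (r j i)))"
    by (intro emeasure_subadditive_countably) (auto intro: sets.countable_UN)
  also have "\<dots> \<le> (\<Sum>j. ennreal (s ^ k / 16 * (1 / 2) ^ j))"
  proof (rule suminf_le)
    fix j
    have "emeasure (lborel_PiM k) (\<Union>i. double_box k (x j i) (r j i)) \<le> ennreal (s ^ k / 16 * (1 / 4) ^ j)"
      using cover(1)[of j] S(1,2)[of j] S(3)[of j] s
      by (intro emeasure_Union_double_box_le_small[OF m s]) (auto simp: \<sigma>_def power_le_one)
    also have "\<dots> \<le> ennreal (s ^ k / 16 * (1 / 2) ^ j)"
      using s by (intro ennreal_leI mult_left_mono power_mono) auto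
    finally show "emeasure (lborel_PiM k) (\<Union>i. double_box k (x j i) (r j i)) \<le> ennreal (s ^ k / 16 * (1 / 2) ^ j)" .
  qed auto
  also have "\<dots> = ennreal (2 * (s ^ k / 16))"
    using s by (intro suminf_ennreal_geometric_half) simp
  also have "\<dots> \<le> ennreal (s ^ k / 2)"
    using s by (intro ennreal_leI) simp
  finally obtain p where p: "p \<in> cube k c (s / 2) - X"
    and HC: "\<And>j. HC k m (radproj k c s p ` X) \<le> ennreal (scale_const m k * 2 ^ j * S j)"
    using exists_good_center[where x = x and r = r and S = S and c = c, OF m s cover S(1,2)] by blast
  have "HC k m (radproj k c s p ` X) \<le> ennreal (scale_const m k * \<sigma> * (1 / 2) ^ j)" for j
  proof -
    have "scale_const m k * 2 ^ j * S j \<le> scale_const m k * 2 ^ j * (\<sigma> * (1 / 4) ^ j)"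
      using S(3)[of j] scale_const_pos[OF m(2)] by (intro mult_left_mono) auto
    also have "\<dots> = scale_const m k * \<sigma> * (2 ^ j * (1 / 4) ^ j)"
      by simp
    also have "2 ^ j * (1 / 4 :: real) ^ j = (1 / 2) ^ j"
      by (simp add: power_mult_distrib[symmetric])
    finally show ?thesis using HC[of j] by (meson ennreal_leI order_trans)
  qed
  moreover have "(\<lambda>j. ennreal (scale_const m k * \<sigma> * (1 / 2) ^ j)) \<longlonglongrightarrow> ennreal (scale_const m k * \<sigma> * 0)"
    by (intro tendsto_ennrealI tendsto_mult tendsto_const LIMSEQ_power_zero) simp
  ultimately have "HC k m (radproj k c s p ` X) \<le> 0"
    by (intro LIMSEQ_le_const) auto
  with p show ?thesis by auto
qed

lemma exists_center_radproj_HC_le_pos: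
  assumes m: "0 < m" "m < real k" and s: "0 < s"
    and X: "0 < HC k m X" "HC k m X < ennreal ((s / 64) powr m / 2)"
  shows "\<exists>p \<in> cube k c (s / 2) - X. HC k m (radproj k c s p ` X) \<le> ennreal (2 * scale_const m k) * HC k m X"
proof -
  obtain h where h: "HC k m X = ennreal h" "0 < h"
    using X by (cases "HC k m X") (auto simp: ennreal_less_top[THEN less_imp_le] top_unique)
  have "HC k m X < ennreal (2 * h)" using h by (simp add: ennreal_less_iff)
  then obtain x r S where cover: "\<forall>i. x i \<in> Rk k \<and> 0 \<le> r i" "X \<subseteq> (\<Union>i. linf_cball k (x i) (r i))"
    and S: "(\<Sum>i. ennreal (r i powr m)) = ennreal S" "0 \<le> S" "S < 2 * h"
    by (rule HC_less_imp_cover)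
  have "h < (s / 64) powr m / 2" using X(2) h by (simp add: ennreal_less_iff)
  then have "emeasure (lborel_PiM k) (\<Union>i. double_box k (x i) (r i)) \<le> ennreal (s ^ k / 16 * 1)"
    using cover(1) S by (intro emeasure_Union_double_box_le_small[OF m s]) auto
  also have "\<dots> \<le> ennreal (s ^ k / 2)"
    using s by (intro ennreal_leI) simp
  finally have "emeasure (lborel_PiM k) (\<Union>j::nat. \<Union>i. double_box k (x i) (r i)) \<le> ennreal (s ^ k / 2)"
    by simp
  then obtain p where p: "p \<in> cube k c (s / 2) - X"
    and "\<forall>j::nat. HC k m (radproj k c s p ` X) \<le> ennreal (scale_const m k * 2 ^ j * S)"
    using exists_good_center[where x = "\<lambda>_. x" and r = "\<lambda>_. r" and S = "\<lambda>_. S" and c = c, OF m s]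
      cover S(1,2) by blast
  then have "HC k m (radproj k c s p ` X) \<le> ennreal (scale_const m k * S)"
    by (metis mult.right_neutral power_0)
  also have "\<dots> \<le> ennreal (2 * scale_const m k * h)"
    using S(3) scale_const_pos[OF m(2)] by (intro ennreal_leI) simp
  also have "\<dots> = ennreal (2 * scale_const m k) * HC k m X"
    using h scale_const_pos[OF m(2)] by (simp add: ennreal_mult)
  finally show ?thesis using p by blast
qed

lemma exists_center_radproj_HC_le:
  assumes m: "0 < m" "m < real k" and s: "0 < s" and c: "c \<in> Rk k"
    and X: "HC k m X < ennreal ((1 / 64) powr m / 2) * HC k m (cube k c s)"
  shows "\<exists>p \<in> cube_int k c s - X. HC k m (radproj k c s p ` X) \<le> ennreal (2 * scale_const m k) * HC k m X"
proof -
  have "ennreal ((1 / 64) powr m / 2) * HC k m (cube k c s) \<le> ennreal ((1 / 64) powr m / 2) * ennreal (s powr m)"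
    using s c by (intro mult_left_mono HC_cube_le) auto
  also have "\<dots> = ennreal ((s / 64) powr m / 2)"
    using s by (simp add: ennreal_mult[symmetric] powr_mult[symmetric])
  finally have small: "HC k m X < ennreal ((s / 64) powr m / 2)"
    using X by (rule order.strict_trans2[rotated])
  have "\<exists>p \<in> cube k c (s / 2) - X. HC k m (radproj k c s p ` X) \<le> ennreal (2 * scale_const m k) * HC k m X"
  proof (cases "HC k m X = 0")
    case True
    then show ?thesis using exists_center_radproj_HC_zero[OF m s True, of c] by simp
  next
    case False
    then show ?thesis using exists_center_radproj_HC_le_pos[OF m s _ small] by (simp add: zero_less_iff_neq_zero)
  qed
  then show ?thesis using cube_half_subset_cube_int[OF s] by blast
qed

theorem lemma3p5:
  fixes m :: real and n :: nat
  assumes "m > 0" and "real n \<ge> m"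
  shows "\<exists>Cscale Cmax. Cscale > 0 \<and> Cmax > 0 \<and>
    (\<forall>k::nat. \<forall>c s X. m < real k \<and> k \<le> n \<and> c \<in> Rk k \<and> s > 0 \<and>
       X \<subseteq> cube_int k c s \<and> HC k m X < ennreal Cmax * HC k m (cube k c s) \<longrightarrow>
       (\<exists>p \<in> cube_int k c s - X.
          HC k m (radproj k c s p ` X) \<le> ennreal Cscale * HC k m X))"
proof (intro exI conjI allI impI)
  \<comment> \<open>\<open>m \<le> n\<close> only makes the range of \<open>k\<close> non-empty.\<close>
  define Cscale where "Cscale = 2 * (\<Sum>k\<le>n. \<bar>scale_const m k\<bar>) + 1"
  show "0 < Cscale" unfolding Cscale_def by (simp add: add_nonneg_pos sum_nonneg)
  show "0 < (1 / 64) powr m / 2" by simp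
  fix k c s X
  assume H: "m < real k \<and> k \<le> n \<and> c \<in> Rk k \<and> s > 0 \<and> X \<subseteq> cube_int k c s
    \<and> HC k m X < ennreal ((1 / 64) powr m / 2) * HC k m (cube k c s)"
  then obtain p where p: "p \<in> cube_int k c s - X"
    and HC: "HC k m (radproj k c s p ` X) \<le> ennreal (2 * scale_const m k) * HC k m X"
    using exists_center_radproj_HC_le[OF assms(1)] by blast
  have "2 * scale_const m k \<le> Cscale"
    using H member_le_sum[of k "{..n}" "\<lambda>k. \<bar>scale_const m k\<bar>"] by (auto simp: Cscale_def)
  then have "HC k m (radproj k c s p ` X) \<le> ennreal Cscale * HC k m X"
    using HC by (meson ennreal_leI mult_right_mono order_trans zero_le)
  with p show "\<exists>p \<in> cube_int k c s - X. HC k m (radproj k c s p ` X) \<le> ennreal Cscale * HC k m X"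
    by blast
qed

end
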